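(* Let $(\mathscr{D},b)$ be a finite bilinear form with $(\mathscr{D},b)\cong(\mathscr{D},-b)$, and let $\sigma\in\{0,4\}$. Then there exists exactly one equivalence class $\{\hat q\}$ of quadratic $\mathsf{T}$-refinements of $b$ such that $\tau_1(\hat q)/|\tau_1(\hat q)|=e^{2\pi i\sigma/8}$, where $\tau_1(\hat q)=\sum_{x\in\mathscr{D}}e^{2\pi i\hat q(x)}$.
   Context: A finite bilinear form $(\mathscr{D},b)$ is a finite abelian group $\mathscr{D}$ with a symmetric, bilinear, non-degenerate map $b:\mathscr{D}\times\mathscr{D}\to\mathbb{Q}/\mathbb{Z}$; $(\mathscr{D},b)\cong(\mathscr{D},-b)$ means there is a group automorphism $f$ of $\mathscr{D}$ with $b(f(x),f(y))=-b(x,y)$. A quadratic refinement of $b$ is a function $\hat q:\mathscr{D}\to\mathbb{Q}/\mathbb{Z}$ with $\hat q(x+y)-\hat q(x)-\hat q(y)+\hat q(0)=b(x,y)$ for all $x,y\in\mathscr{D}$. Two quadratic refinements $\hat q,\hat q'$ on $\mathscr{D}$ are equivalent if there is $\delta\in\mathscr{D}$ with $\hat q(x)=\hat q'(x+\delta)$ for all $x$; the equivalence class is denoted $\{\hat q\}$ (the Gauss sum $\tau_1$ depends only on the class). A quadratic refinement $\hat q$ is a $\mathsf{T}$-refinement if there is a group automorphism $\gamma$ of $\mathscr{D}$ with $\{\hat q\circ\gamma\}=\{-\hat q\}$. *)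

theory Defs
  imports "HOL-Analysis.Analysis"
begin

text \<open>Values in Q/Z are represented by rationals; two values are equal in Q/Z iff
  their difference is an integer. The finite abelian group D is a finite type
  of class ab_group_add.\<close>

definition qz_eq :: "rat \<Rightarrow> rat \<Rightarrow> bool" where
  "qz_eq a c \<longleftrightarrow> a - c \<in> \<int>"

definition group_aut :: "('a::ab_group_add \<Rightarrow> 'a) \<Rightarrow> bool" where
  "group_aut f \<longleftrightarrow> bij f \<and> (\<forall>x y. f (x + y) = f x + f y)"

definition finite_bilinear_form :: "('a::{finite,ab_group_add} \<Rightarrow> 'a \<Rightarrow> rat) \<Rightarrow> bool" where
  "finite_bilinear_form b \<longleftrightarrow>
     (\<forall>x y. qz_eq (b x y) (b y x)) \<and>
     (\<forall>x y z. qz_eq (b (x + y) z) (b x z + b y z)) \<and>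
     (\<forall>x. (\<forall>y. qz_eq (b x y) 0) \<longrightarrow> x = 0)"

definition iso_to_neg :: "('a::ab_group_add \<Rightarrow> 'a \<Rightarrow> rat) \<Rightarrow> bool" where
  "iso_to_neg b \<longleftrightarrow> (\<exists>f. group_aut f \<and> (\<forall>x y. qz_eq (b (f x) (f y)) (- b x y)))"

definition quad_refinement :: "('a::ab_group_add \<Rightarrow> 'a \<Rightarrow> rat) \<Rightarrow> ('a \<Rightarrow> rat) \<Rightarrow> bool" where
  "quad_refinement b q \<longleftrightarrow> (\<forall>x y. qz_eq (q (x + y) - q x - q y + q 0) (b x y))"

definition qr_equiv :: "('a::ab_group_add \<Rightarrow> rat) \<Rightarrow> ('a \<Rightarrow> rat) \<Rightarrow> bool" where
  "qr_equiv q q' \<longleftrightarrow> (\<exists>\<delta>. \<forall>x. qz_eq (q x) (q' (x + \<delta>)))"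

definition T_refinement :: "('a::ab_group_add \<Rightarrow> 'a \<Rightarrow> rat) \<Rightarrow> ('a \<Rightarrow> rat) \<Rightarrow> bool" where
  "T_refinement b q \<longleftrightarrow> quad_refinement b q \<and>
     (\<exists>\<gamma>. group_aut \<gamma> \<and> qr_equiv (q \<circ> \<gamma>) (\<lambda>x. - q x))"

definition tau1 :: "('a::finite \<Rightarrow> rat) \<Rightarrow> complex" where
  "tau1 q = (\<Sum>x\<in>UNIV. exp (2 * pi * \<i> * of_real (real_of_rat (q x))))"

end

(*
  Quadratic refinements of b exist: one is extended one cyclic step at a time, using that
  Q/Z is divisible. By nondegeneracy every mod-Z homomorphism is b(-, d), so two refinements
  differ by a shift and a constant, q' = q(- + d) + c, whence tau1 q' = e(c) tau1 q with
  e(r) = exp(2 pi i r) (qz_exp below). As |tau1 q|^2 = |D|, the class of a refinement is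
  determined by the phase of its Gauss sum, and adding constants multiplies the phase by any
  element of e(Q). For an anti-isometry f, -q o f is again a refinement, so
  q o f = c - q(- + d) and tau1 q = e(c) conj (tau1 q): the squared phase is e(c). Hence the
  phase lies in e(Q), and a refinement with phase e(sigma/8), sigma in {0, 4}, has squared
  phase 1; then c is an integer, i.e. q o f is equivalent to -q, so q is a T-refinement.
*)

theory Submission
  imports Defs
begin

section \<open>Congruence modulo the integers\<close>

lemma qz_eq_refl [simp]: "qz_eq a a"
  by (simp add: qz_eq_def)

lemma qz_eq_sym: "qz_eq a c \<Longrightarrow> qz_eq c a"
  unfolding qz_eq_def by (metis Ints_minus minus_diff_eq)

lemma qz_eq_trans [trans]: "qz_eq a c \<Longrightarrow> qz_eq c d \<Longrightarrow> qz_eq a d"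
  unfolding qz_eq_def by (metis Ints_add diff_add_cancel add_diff_eq)

lemma qz_eq_add: "qz_eq a a' \<Longrightarrow> qz_eq c c' \<Longrightarrow> qz_eq (a + c) (a' + c')"
  unfolding qz_eq_def by (metis Ints_add add_diff_add)

lemma qz_eq_minus: "qz_eq a a' \<Longrightarrow> qz_eq (- a) (- a')"
  unfolding qz_eq_def by (metis Ints_minus minus_diff_eq minus_diff_minus)

lemma qz_eq_diff: "qz_eq a a' \<Longrightarrow> qz_eq c c' \<Longrightarrow> qz_eq (a - c) (a' - c')"
  using qz_eq_add[OF _ qz_eq_minus] by (simp only: diff_conv_add_uminus)

lemma qz_eq_of_nat_mult: "qz_eq a a' \<Longrightarrow> qz_eq (of_nat n * a) (of_nat n * a')"
  unfolding qz_eq_def by (metis Ints_mult Ints_of_nat right_diff_distrib)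

(* Congruences are combined like linear combinations: add up known congruences with
   qz_eq_add etc., then check that both sides have the same difference in Q. *)
lemma qz_eq_of_diff_eq: "qz_eq a' c' \<Longrightarrow> a - c = a' - c' \<Longrightarrow> qz_eq a c"
  by (simp add: qz_eq_def)

definition qz_exp :: "rat \<Rightarrow> complex" where
  "qz_exp r = exp (2 * pi * \<i> * of_real (real_of_rat r))"

lemma qz_exp_0 [simp]: "qz_exp 0 = 1"
  by (simp add: qz_exp_def)

lemma qz_exp_add: "qz_exp (a + c) = qz_exp a * qz_exp c"
  unfolding qz_exp_def by (simp add: of_rat_add distrib_left exp_add)

lemma qz_exp_minus: "qz_exp (- a) = cnj (qz_exp a)"
  unfolding qz_exp_def by (simp add: exp_cnj of_rat_minus)

lemma qz_exp_diff: "qz_exp (a - c) = qz_exp a * cnj (qz_exp c)"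
  using qz_exp_add[of a "- c"] by (simp add: qz_exp_minus)

lemma norm_qz_exp [simp]: "norm (qz_exp a) = 1"
  unfolding qz_exp_def by (simp add: norm_exp_eq_Re)

lemma qz_exp_nonzero [simp]: "qz_exp a \<noteq> 0"
  unfolding qz_exp_def by simp

lemma qz_exp_eq_1_iff: "qz_exp a = 1 \<longleftrightarrow> a \<in> \<int>"
proof
  assume "qz_exp a = 1"
  then obtain n :: int where "2 * pi * real_of_rat a = of_int (2 * n) * pi"
    unfolding qz_exp_def by (auto simp: exp_eq_1)
  then have "real_of_rat a = of_int n"
    by simp
  then have "a = of_int n"
    by (metis of_rat_eq_iff of_rat_of_int_eq)
  then show "a \<in> \<int>" by simp
next
  assume "a \<in> \<int>"
  then obtain n where "a = of_int n" by (auto elim: Ints_cases)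
  then show "qz_exp a = 1"
    unfolding qz_exp_def using exp_integer_2pi[of "of_int n"] by (simp add: mult_ac)
qed

lemma qz_exp_eq_iff: "qz_exp a = qz_exp c \<longleftrightarrow> qz_eq a c"
proof -
  have "qz_exp a = qz_exp (a - c) * qz_exp c"
    by (simp flip: qz_exp_add)
  then show ?thesis
    by (simp add: qz_eq_def flip: qz_exp_eq_1_iff)
qed

lemma qz_exp_half: "qz_exp (1 / 2) = -1"
  unfolding qz_exp_def by (simp add: of_rat_divide mult.commute)

lemma qz_exp_sqrt:
  assumes "u ^ 2 = qz_exp a"
  obtains \<theta> where "u = qz_exp \<theta>"
proof -
  have "(u / qz_exp (a / 2)) ^ 2 = 1"
    using assms by (simp add: power_divide power2_eq_square flip: qz_exp_add)
  then have "u / qz_exp (a / 2) = 1 \<or> u / qz_exp (a / 2) = qz_exp (1 / 2)"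
    by (simp add: power2_eq_1_iff qz_exp_half)
  then have "u = qz_exp (a / 2) \<or> u = qz_exp (1 / 2) * qz_exp (a / 2)"
    by (auto simp: divide_eq_eq)
  then show ?thesis
    using that by (metis qz_exp_add)
qed

lemma sgn_power2_eq:
  fixes z w :: complex
  assumes "z \<noteq> 0" and "z = w * cnj z"
  shows "sgn z ^ 2 = w"
proof -
  have "sgn z ^ 2 = z ^ 2 / (z * cnj z)"
    by (simp add: sgn_eq power_divide flip: complex_norm_square)
  also have "\<dots> = w"
    using assms by (simp add: power2_eq_square field_simps)
  finally show ?thesis .
qed

lemma sgn_qz_exp [simp]: "sgn (qz_exp a) = qz_exp a"
  by (simp add: sgn_eq)

lemma qz_exp_of_int_div_numeral:
  "qz_exp (of_int k / numeral m) = exp (2 * pi * \<i> * of_int k / numeral m)"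
  unfolding qz_exp_def by (simp add: of_rat_divide)

section \<open>Gauss sums\<close>

lemma tau1_eq_sum_qz_exp: "tau1 q = (\<Sum>x\<in>UNIV. qz_exp (q x))"
  unfolding tau1_def qz_exp_def ..

lemma sum_UNIV_shift:
  fixes f :: "'a::{finite,group_add} \<Rightarrow> 'b::comm_monoid_add"
  shows "(\<Sum>x\<in>UNIV. f (x + a)) = (\<Sum>x\<in>UNIV. f x)"
  by (rule sum.reindex_bij_betw[OF bij_plus_right])

lemma sum_multiplicative_eq_0:
  fixes \<phi> :: "'a::{finite,ab_group_add} \<Rightarrow> 'b::field"
  assumes mult: "\<And>x y. \<phi> (x + y) = \<phi> x * \<phi> y" and "\<phi> y \<noteq> 1"
  shows "(\<Sum>x\<in>UNIV. \<phi> x) = 0"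
proof -
  have "(\<Sum>x\<in>UNIV. \<phi> x) = (\<Sum>x\<in>UNIV. \<phi> (x + y))"
    by (rule sum_UNIV_shift[symmetric])
  also have "\<dots> = (\<Sum>x\<in>UNIV. \<phi> x) * \<phi> y"
    by (simp add: mult sum_distrib_right)
  finally have "(\<Sum>x\<in>UNIV. \<phi> x) * (1 - \<phi> y) = 0"
    by (simp add: algebra_simps)
  with \<open>\<phi> y \<noteq> 1\<close> show ?thesis
    by simp
qed

lemma tau1_cong:
  assumes "\<And>x. qz_eq (q x) (q' x)"
  shows "tau1 q = tau1 q'"
  unfolding tau1_eq_sum_qz_exp using assms by (intro sum.cong) (simp_all add: qz_exp_eq_iff)

lemma tau1_shift_add:
  fixes q :: "'a::{finite,group_add} \<Rightarrow> rat"
  shows "tau1 (\<lambda>x. q (x + \<delta>) + c) = qz_exp c * tau1 q"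
proof -
  have "tau1 (\<lambda>x. q (x + \<delta>) + c) = (\<Sum>x\<in>UNIV. qz_exp (q (x + \<delta>))) * qz_exp c"
    by (simp add: tau1_eq_sum_qz_exp qz_exp_add sum_distrib_right)
  then show ?thesis
    by (simp add: tau1_eq_sum_qz_exp sum_UNIV_shift[of "\<lambda>x. qz_exp (q x)"] mult.commute)
qed

lemma tau1_uminus: "tau1 (\<lambda>x. - q x) = cnj (tau1 q)"
  unfolding tau1_eq_sum_qz_exp by (simp add: qz_exp_minus)

lemma tau1_comp_bij: "bij f \<Longrightarrow> tau1 (q \<circ> f) = tau1 q"
  unfolding tau1_eq_sum_qz_exp comp_def by (rule sum.reindex_bij_betw)

section \<open>Multiples in a finite abelian group\<close>

primrec natmul :: "nat \<Rightarrow> 'a::monoid_add \<Rightarrow> 'a" where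
  "natmul 0 g = 0"
| "natmul (Suc n) g = g + natmul n g"

lemma natmul_add: "natmul (m + n) g = natmul m g + natmul n g"
  by (induction m) (simp_all add: add.assoc)

lemma natmul_diff:
  fixes g :: "'a::group_add"
  shows "n \<le> m \<Longrightarrow> natmul (m - n) g = natmul m g - natmul n g"
  by (metis natmul_add le_add_diff_inverse2 add_diff_cancel)

lemma natmul_period:
  fixes g :: "'a::{finite,group_add}"
  obtains p where "0 < p" and "natmul p g = 0"
proof -
  have "\<not> inj (\<lambda>n. natmul n g)"
    using finite_imageD[of "\<lambda>n. natmul n g" UNIV] by auto
  then obtain i j where "i < j" and "natmul i g = natmul j g"
    unfolding inj_def by (metis linorder_neqE_nat)
  then have "natmul (j - i) g = 0"
    by (simp add: natmul_diff)
  with \<open>i < j\<close> show ?thesis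
    by (intro that[of "j - i"]) auto
qed

definition add_closed :: "'a::monoid_add set \<Rightarrow> bool" where
  "add_closed H \<longleftrightarrow> 0 \<in> H \<and> (\<forall>x\<in>H. \<forall>y\<in>H. x + y \<in> H)"

lemma add_closed_natmul: "add_closed H \<Longrightarrow> x \<in> H \<Longrightarrow> natmul n x \<in> H"
  by (induction n) (auto simp: add_closed_def)

(* In a finite group an additively closed set is a subgroup, as -x is a positive multiple
   of x; so natural multiples suffice throughout. *)
lemma add_closed_diff:
  fixes H :: "'a::{finite,group_add} set"
  assumes H: "add_closed H" and "x \<in> H" "y \<in> H"
  shows "x - y \<in> H"
proof -
  obtain p where "0 < p" "natmul p y = 0"
    by (rule natmul_period)
  then have "- y = natmul (p - 1) y"
    by (metis Suc_diff_1 natmul.simps(2) add_eq_0_iff)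
  then show ?thesis
    using H assms add_closed_natmul unfolding add_closed_def by (metis diff_conv_add_uminus)
qed

definition adjoin :: "'a::monoid_add set \<Rightarrow> 'a \<Rightarrow> 'a set" where
  "adjoin H g = {h + natmul k g | h k. h \<in> H}"

lemma add_closed_adjoin:
  fixes H :: "'a::comm_monoid_add set"
  assumes "add_closed H"
  shows "add_closed (adjoin H g)"
  unfolding add_closed_def
proof (intro conjI ballI)
  have "0 = 0 + natmul 0 g"
    by simp
  then show "0 \<in> adjoin H g"
    using assms unfolding adjoin_def add_closed_def by blast
next
  fix x y
  assume "x \<in> adjoin H g" "y \<in> adjoin H g"
  then obtain h1 k1 h2 k2 where "x = h1 + natmul k1 g" "y = h2 + natmul k2 g" "h1 \<in> H" "h2 \<in> H"
    unfolding adjoin_def by blast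
  moreover have "h1 + natmul k1 g + (h2 + natmul k2 g) = (h1 + h2) + natmul (k1 + k2) g"
    by (simp add: natmul_add ac_simps)
  ultimately show "x + y \<in> adjoin H g"
    using assms unfolding adjoin_def add_closed_def by blast
qed

lemma subset_adjoin: "H \<subseteq> adjoin H g"
  unfolding adjoin_def by (force intro: exI[of _ 0])

lemma mem_adjoin: "0 \<in> H \<Longrightarrow> g \<in> adjoin H g"
  unfolding adjoin_def by (force intro: exI[of _ 1])

lemma nat_add_diff_closed_multiples:
  fixes M :: "nat set"
  assumes "p \<in> M" "0 < p"
    and M_add: "\<And>m m'. m \<in> M \<Longrightarrow> m' \<in> M \<Longrightarrow> m + m' \<in> M"
    and M_diff: "\<And>m m'. m \<in> M \<Longrightarrow> m' \<in> M \<Longrightarrow> m - m' \<in> M"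
  obtains n where "0 < n" and "\<And>m. m \<in> M \<longleftrightarrow> n dvd m"
proof -
  define n where "n = (LEAST n. 0 < n \<and> n \<in> M)"
  have n: "0 < n" "n \<in> M"
    using LeastI[of "\<lambda>n. 0 < n \<and> n \<in> M" p] assms(1,2) unfolding n_def by auto
  have multiple: "j * n \<in> M" for j
  proof (induction j)
    case 0
    show ?case
      using M_diff[OF n(2) n(2)] by simp
  next
    case (Suc j)
    then show ?case
      using M_add[OF n(2) Suc] by simp
  qed
  have "n dvd m" if "m \<in> M" for m
  proof -
    have "m mod n = m - (m div n) * n"
      by (simp add: minus_div_mult_eq_mod)
    then have "m mod n \<in> M"
      using M_diff[OF that multiple] by simp
    moreover have "m mod n < n"
      using n(1) by simp
    ultimately have "m mod n = 0"
      using not_less_Least[of "m mod n" "\<lambda>n. 0 < n \<and> n \<in> M"] unfolding n_def by auto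
    then show ?thesis
      by (simp add: dvd_eq_mod_eq_0)
  qed
  then have "m \<in> M \<longleftrightarrow> n dvd m" for m
    using multiple by (auto simp: dvd_def mult.commute)
  with n(1) show ?thesis
    using that by blast
qed

lemma add_closed_natmul_iff_dvd:
  fixes H :: "'a::{finite,group_add} set"
  assumes H: "add_closed H"
  obtains n where "0 < n" and "\<And>m. natmul m g \<in> H \<longleftrightarrow> n dvd m"
proof -
  define M where "M = {m. natmul m g \<in> H}"
  obtain p where p: "0 < p" "natmul p g = 0"
    by (rule natmul_period)
  then have "p \<in> M"
    using H by (simp add: M_def add_closed_def)
  have M_add: "m + m' \<in> M" if "m \<in> M" "m' \<in> M" for m m'
    using that H unfolding M_def add_closed_def by (simp add: natmul_add)
  have M_diff: "m - m' \<in> M" if "m \<in> M" "m' \<in> M" for m m'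
    using that add_closed_diff[OF H] H unfolding M_def add_closed_def
    by (cases "m' \<le> m") (simp_all add: natmul_diff)
  show ?thesis
  proof (rule nat_add_diff_closed_multiples[OF \<open>p \<in> M\<close> p(1) M_add M_diff])
    fix n
    assume "0 < n" and "\<And>m. m \<in> M \<longleftrightarrow> n dvd m"
    then show ?thesis
      by (intro that) (simp_all add: M_def)
  qed
qed

lemma qz_additive_multiples:
  fixes \<psi> :: "nat \<Rightarrow> rat"
  assumes \<psi>_add: "\<And>i j. qz_eq (\<psi> (i * n + j * n)) (\<psi> (i * n) + \<psi> (j * n))"
  shows "qz_eq (\<psi> (j * n)) (of_nat j * \<psi> n)"
proof (induction j)
  case 0
  show ?case
    by (rule qz_eq_of_diff_eq[OF qz_eq_sym[OF \<psi>_add[of 0 0]]]) simp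
next
  case (Suc j)
  have "qz_eq (\<psi> (Suc j * n)) (\<psi> n + \<psi> (j * n))"
    using \<psi>_add[of 1 j] by simp
  also have "qz_eq \<dots> (\<psi> n + of_nat j * \<psi> n)"
    by (intro qz_eq_add qz_eq_refl Suc)
  finally show ?case
    by (simp add: algebra_simps)
qed

section \<open>Quadratic refinements of a bilinear form\<close>

lemma quad_refinement_add_const: "quad_refinement b q \<Longrightarrow> quad_refinement b (\<lambda>x. q x + c)"
  unfolding quad_refinement_def by (simp add: algebra_simps)

locale qz_bilinear_form =
  fixes b :: "'a::{finite,ab_group_add} \<Rightarrow> 'a \<Rightarrow> rat"
  assumes finite_bilinear_form: "finite_bilinear_form b"
begin

lemma b_sym: "qz_eq (b x y) (b y x)"
  using finite_bilinear_form unfolding finite_bilinear_form_def by blast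

lemma b_add_left: "qz_eq (b (x + y) z) (b x z + b y z)"
  using finite_bilinear_form unfolding finite_bilinear_form_def by blast

lemma b_add_right: "qz_eq (b z (x + y)) (b z x + b z y)"
proof -
  have "qz_eq (b z (x + y)) (b (x + y) z)"
    by (rule b_sym)
  also have "qz_eq \<dots> (b x z + b y z)"
    by (rule b_add_left)
  also have "qz_eq \<dots> (b z x + b z y)"
    by (intro qz_eq_add b_sym)
  finally show ?thesis .
qed

lemma b_nondegenerate: "(\<And>y. qz_eq (b x y) 0) \<Longrightarrow> x = 0"
  using finite_bilinear_form unfolding finite_bilinear_form_def by blast

lemma b_zero_left: "qz_eq (b 0 y) 0"
  using b_add_left[of 0 0 y] by (simp add: qz_eq_def)

lemma b_natmul_left: "qz_eq (b (natmul k x) y) (of_nat k * b x y)"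
proof (induction k)
  case 0
  then show ?case
    using b_zero_left by simp
next
  case (Suc k)
  have "qz_eq (b (natmul (Suc k) x) y) (b x y + b (natmul k x) y)"
    by (simp add: b_add_left)
  also have "qz_eq \<dots> (b x y + of_nat k * b x y)"
    by (intro qz_eq_add qz_eq_refl Suc)
  finally show ?case
    by (simp add: algebra_simps)
qed

lemma b_natmul_right: "qz_eq (b y (natmul k x)) (of_nat k * b y x)"
  using qz_eq_trans[OF qz_eq_trans[OF b_sym b_natmul_left] qz_eq_of_nat_mult[OF b_sym]] .

lemma b_expand:
  "qz_eq (b (x + natmul k g) (y + natmul l g))
     (b x y + of_nat l * b x g + of_nat k * b y g + of_nat k * of_nat l * b g g)"
proof -
  have "qz_eq (b (x + natmul k g) (y + natmul l g))
      (b x (y + natmul l g) + b (natmul k g) (y + natmul l g))"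
    by (rule b_add_left)
  also have "qz_eq \<dots> ((b x y + b x (natmul l g)) + (b (natmul k g) y + b (natmul k g) (natmul l g)))"
    by (intro qz_eq_add b_add_right)
  also have "qz_eq \<dots> ((b x y + of_nat l * b x g) + (of_nat k * b g y + of_nat k * b g (natmul l g)))"
    by (intro qz_eq_add qz_eq_refl b_natmul_left b_natmul_right)
  also have "qz_eq \<dots> ((b x y + of_nat l * b x g) + (of_nat k * b y g + of_nat k * (of_nat l * b g g)))"
    by (intro qz_eq_add qz_eq_refl qz_eq_of_nat_mult b_sym b_natmul_right)
  finally show ?thesis
    by (simp add: algebra_simps)
qed

lemma quad_refinementI:
  assumes "\<And>x y. qz_eq (q (x + y)) (q x + q y + b x y)"
  shows "quad_refinement b q"
proof -
  have "qz_eq (q 0) 0"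
    by (rule qz_eq_of_diff_eq[OF qz_eq_diff[OF qz_eq_sym[OF assms[of 0 0]] b_zero_left[of 0]]]) simp
  then show ?thesis
    unfolding quad_refinement_def
  proof (intro allI)
    fix x y
    show "qz_eq (q (x + y) - q x - q y + q 0) (b x y)"
      by (rule qz_eq_of_diff_eq[OF qz_eq_add[OF assms[of x y] \<open>qz_eq (q 0) 0\<close>]]) simp
  qed
qed

definition quad_refinement_on :: "'a set \<Rightarrow> ('a \<Rightarrow> rat) \<Rightarrow> bool" where
  "quad_refinement_on H Q \<longleftrightarrow> (\<forall>x\<in>H. \<forall>y\<in>H. qz_eq (Q (x + y)) (Q x + Q y + b x y))"

(* Restricted to the multiples of g lying in H, Q refines (k, l) \<mapsto> k l b(g, g) up to a
   mod-Z homomorphism on a subgroup of the naturals; extending that homomorphism linearly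
   (Q/Z is divisible) gives R on all of the naturals. *)
lemma quad_refinement_on_multiples:
  assumes H: "add_closed H" and Q: "quad_refinement_on H Q"
  obtains R where "\<And>k l. R (k + l) = R k + R l + of_nat k * of_nat l * b g g"
    and "\<And>m. natmul m g \<in> H \<Longrightarrow> qz_eq (Q (natmul m g)) (R m)"
proof -
  define C :: "nat \<Rightarrow> rat" where "C k = of_nat k * (of_nat k - 1) / 2" for k
  have C_add: "C (k + l) = C k + C l + of_nat k * of_nat l" for k l
    by (simp add: C_def field_simps)
  define \<psi> where "\<psi> m = Q (natmul m g) - C m * b g g" for m
  obtain n where "0 < n" and M: "\<And>m. natmul m g \<in> H \<longleftrightarrow> n dvd m"
    using add_closed_natmul_iff_dvd[OF H, of g] by blast
  have \<psi>_add: "qz_eq (\<psi> (j * n + j' * n)) (\<psi> (j * n) + \<psi> (j' * n))" for j j'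
  proof -
    have "qz_eq (Q (natmul (j * n) g + natmul (j' * n) g))
        (Q (natmul (j * n) g) + Q (natmul (j' * n) g) + b (natmul (j * n) g) (natmul (j' * n) g))"
      using Q M unfolding quad_refinement_on_def by simp
    moreover have "qz_eq (b (natmul (j * n) g) (natmul (j' * n) g))
        (of_nat (j * n) * (of_nat (j' * n) * b g g))"
      by (rule qz_eq_trans[OF b_natmul_left qz_eq_of_nat_mult[OF b_natmul_right]])
    ultimately show ?thesis
      by (rule qz_eq_of_diff_eq[OF qz_eq_add]) (simp add: \<psi>_def natmul_add C_add algebra_simps)
  qed
  have \<psi>_linear: "qz_eq (\<psi> (j * n)) (of_nat j * \<psi> n)" for j
    by (rule qz_additive_multiples[OF \<psi>_add])
  define t where "t = \<psi> n / of_nat n"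
  define R where "R k = C k * b g g + of_nat k * t" for k
  show ?thesis
  proof (rule that)
    show "R (k + l) = R k + R l + of_nat k * of_nat l * b g g" for k l
      by (simp add: R_def C_add algebra_simps)
    show "qz_eq (Q (natmul m g)) (R m)" if "natmul m g \<in> H" for m
    proof -
      from that obtain j where "m = j * n"
        using M by (auto simp: dvd_def mult.commute)
      then show ?thesis
        using \<open>0 < n\<close>
        by (intro qz_eq_of_diff_eq[OF \<psi>_linear[of j]]) (simp add: \<psi>_def R_def t_def)
    qed
  qed
qed

lemma quad_refinement_on_adjoinI:
  assumes H: "add_closed H"
    and F_wd: "\<And>h1 h2 k1 k2. h1 \<in> H \<Longrightarrow> h2 \<in> H \<Longrightarrow> h1 + natmul k1 g = h2 + natmul k2 g \<Longrightarrow>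
      qz_eq (F h1 k1) (F h2 k2)"
    and F_add: "\<And>h1 h2 k1 k2. h1 \<in> H \<Longrightarrow> h2 \<in> H \<Longrightarrow>
      qz_eq (F (h1 + h2) (k1 + k2)) (F h1 k1 + F h2 k2 + b (h1 + natmul k1 g) (h2 + natmul k2 g))"
  obtains Q' where "quad_refinement_on (adjoin H g) Q'"
proof -
  define Q' where "Q' x = (case SOME (h, k). h \<in> H \<and> x = h + natmul k g of (h, k) \<Rightarrow> F h k)" for x
  have Q'_F: "qz_eq (Q' (h + natmul k g)) (F h k)" if "h \<in> H" for h k
  proof -
    let ?P = "\<lambda>(h', k'). h' \<in> H \<and> h + natmul k g = h' + natmul k' g"
    obtain h' k' where hk': "(SOME hk. ?P hk) = (h', k')"
      by fastforce
    have "?P (h', k')"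
      using someI[of ?P "(h, k)"] that unfolding hk' by simp
    moreover have "Q' (h + natmul k g) = F h' k'"
      unfolding Q'_def hk' by simp
    ultimately show ?thesis
      using F_wd[of h' h k' k] that by (simp add: qz_eq_sym)
  qed
  show ?thesis
  proof (rule that, unfold quad_refinement_on_def, intro ballI)
    fix x y
    assume "x \<in> adjoin H g" "y \<in> adjoin H g"
    then obtain h1 k1 h2 k2 where xy: "x = h1 + natmul k1 g" "y = h2 + natmul k2 g"
      and h: "h1 \<in> H" "h2 \<in> H"
      unfolding adjoin_def by blast
    have "x + y = (h1 + h2) + natmul (k1 + k2) g"
      by (simp add: xy natmul_add ac_simps)
    then have "qz_eq (Q' (x + y)) (F (h1 + h2) (k1 + k2))"
      using Q'_F H h unfolding add_closed_def by simp
    also have "qz_eq \<dots> (F h1 k1 + F h2 k2 + b x y)"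
      unfolding xy by (rule F_add[OF h])
    also have "qz_eq \<dots> (Q' x + Q' y + b x y)"
      unfolding xy using h by (intro qz_eq_add qz_eq_refl qz_eq_sym[OF Q'_F])
    finally show "qz_eq (Q' (x + y)) (Q' x + Q' y + b x y)" .
  qed
qed

(* The value at h + k g is Q h + R k + k b(h, g); it does not depend on the representation
   because R agrees with Q on the multiples of g lying in H. *)
lemma quad_refinement_on_adjoin:
  assumes H: "add_closed H" and Q: "quad_refinement_on H Q"
  obtains Q' where "quad_refinement_on (adjoin H g) Q'"
proof -
  obtain R where R_add: "\<And>k l. R (k + l) = R k + R l + of_nat k * of_nat l * b g g"
    and Q_R: "\<And>m. natmul m g \<in> H \<Longrightarrow> qz_eq (Q (natmul m g)) (R m)"
    using quad_refinement_on_multiples[OF H Q] by blast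
  have Q_add: "qz_eq (Q (x + y)) (Q x + Q y + b x y)" if "x \<in> H" "y \<in> H" for x y
    using Q that unfolding quad_refinement_on_def by blast
  define F where "F h k = Q h + R k + of_nat k * b h g" for h k
  have F_shift: "qz_eq (F (h + natmul m g) k) (F h (k + m))" if "h \<in> H" "natmul m g \<in> H" for h m k
    by (rule qz_eq_of_diff_eq[OF qz_eq_add[OF qz_eq_add[OF qz_eq_add[OF
          Q_add[OF that] Q_R[OF that(2)]] b_natmul_right[of h m g]]
          qz_eq_of_nat_mult[OF qz_eq_add[OF b_add_left[of h "natmul m g" g] b_natmul_left[of m g g]], of k]]])
      (simp add: F_def R_add algebra_simps)
  have F_wd_le: "qz_eq (F h1 k1) (F h2 k2)"
    if "h1 \<in> H" "h2 \<in> H" "h1 + natmul k1 g = h2 + natmul k2 g" "k2 \<le> k1" for h1 h2 k1 k2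
  proof -
    have "natmul (k1 - k2) g = h2 - h1"
      using that(3,4) by (simp add: natmul_diff algebra_simps)
    with F_shift[OF that(1), of "k1 - k2" k2] show ?thesis
      using add_closed_diff[OF H that(2,1)] that(4) by (simp add: qz_eq_sym)
  qed
  have F_wd: "qz_eq (F h1 k1) (F h2 k2)"
    if "h1 \<in> H" "h2 \<in> H" "h1 + natmul k1 g = h2 + natmul k2 g" for h1 h2 k1 k2
    using F_wd_le[OF that] F_wd_le[OF that(2,1) that(3)[symmetric]] qz_eq_sym
    by (cases "k2 \<le> k1") auto
  have F_add: "qz_eq (F (h1 + h2) (k1 + k2))
      (F h1 k1 + F h2 k2 + b (h1 + natmul k1 g) (h2 + natmul k2 g))"
    if "h1 \<in> H" "h2 \<in> H" for h1 h2 k1 k2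
    by (rule qz_eq_of_diff_eq[OF qz_eq_diff[OF qz_eq_add[OF Q_add[OF that]
          qz_eq_of_nat_mult[OF b_add_left[of h1 h2 g], of "k1 + k2"]] b_expand[of h1 k1 g h2 k2]]])
      (simp add: F_def R_add algebra_simps)
  show ?thesis
    using quad_refinement_on_adjoinI[OF H F_wd F_add] that by blast
qed

lemma exists_quad_refinement:
  obtains q where "quad_refinement b q"
proof -
  have "\<exists>H Q. S \<subseteq> H \<and> add_closed H \<and> quad_refinement_on H Q" if "finite S" for S
    using that
  proof (induction S rule: finite_induct)
    case empty
    have "add_closed {0}" "quad_refinement_on {0} (\<lambda>_. 0)"
      unfolding add_closed_def quad_refinement_on_def using qz_eq_sym[OF b_zero_left] by auto
    then show ?case
      by blast
  next
    case (insert g S)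
    then obtain H Q where "S \<subseteq> H" "add_closed H" "quad_refinement_on H Q"
      by blast
    moreover obtain Q' where "quad_refinement_on (adjoin H g) Q'"
      using quad_refinement_on_adjoin[OF \<open>add_closed H\<close> \<open>quad_refinement_on H Q\<close>] by blast
    moreover have "insert g S \<subseteq> adjoin H g"
      using \<open>S \<subseteq> H\<close> \<open>add_closed H\<close> subset_adjoin mem_adjoin unfolding add_closed_def by blast
    ultimately show ?case
      using add_closed_adjoin by blast
  qed
  then obtain H Q where "UNIV \<subseteq> H" "quad_refinement_on H Q"
    using finite[of UNIV] by blast
  then have "quad_refinement_on UNIV Q"
    by (simp add: top.extremum_unique)
  then show ?thesis
    using that quad_refinementI unfolding quad_refinement_on_def by blast
qed

lemma sum_qz_exp_b: "(\<Sum>y\<in>UNIV. qz_exp (b x y)) = (if x = 0 then of_nat CARD('a) else 0)"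
proof (cases "x = 0")
  case True
  have "qz_exp (b 0 y) = 1" for y
    using b_zero_left by (simp add: qz_eq_def qz_exp_eq_1_iff)
  with True show ?thesis
    by simp
next
  case False
  then obtain y where "\<not> qz_eq (b x y) 0"
    using b_nondegenerate by blast
  then have "(\<Sum>y\<in>UNIV. qz_exp (b x y)) = 0"
    by (intro sum_multiplicative_eq_0[where y = y])
      (simp_all add: qz_exp_eq_iff b_add_right flip: qz_exp_add qz_exp_0)
  with False show ?thesis
    by simp
qed

lemma qz_hom_represented_by_b:
  assumes hom: "\<And>x y. qz_eq (\<phi> (x + y)) (\<phi> x + \<phi> y)"
  shows "\<exists>\<delta>. \<forall>x. qz_eq (\<phi> x) (b x \<delta>)"
proof (rule ccontr)
  assume no_\<delta>: "\<not> ?thesis"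
  let ?N = "of_nat CARD('a) :: complex"
  let ?S = "\<Sum>d\<in>UNIV. \<Sum>x\<in>UNIV. qz_exp (\<phi> x - b x d)"
  have "(\<Sum>x\<in>UNIV. qz_exp (\<phi> x - b x d)) = 0" for d
  proof -
    from no_\<delta> obtain y where "\<not> qz_eq (\<phi> y) (b y d)"
      by blast
    moreover have "qz_exp (\<phi> (x + y) - b (x + y) d) = qz_exp (\<phi> x - b x d) * qz_exp (\<phi> y - b y d)"
      for x y
      unfolding qz_exp_add[symmetric] qz_exp_eq_iff
      by (rule qz_eq_of_diff_eq[OF qz_eq_diff[OF hom[of x y] b_add_left[of x y d]]]) (simp add: algebra_simps)
    ultimately show ?thesis
      by (intro sum_multiplicative_eq_0[where y = y]) (simp_all add: qz_exp_eq_1_iff qz_eq_def)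
  qed
  then have "?S = 0"
    by simp
  have "?S = (\<Sum>x\<in>UNIV. qz_exp (\<phi> x) * cnj (\<Sum>d\<in>UNIV. qz_exp (b x d)))"
    by (subst sum.swap) (simp add: sum_distrib_left qz_exp_diff)
  also have "\<dots> = qz_exp (\<phi> 0) * ?N"
    by (simp add: sum_qz_exp_b if_distrib cong: if_cong)
  also have "qz_exp (\<phi> 0) = 1"
    using hom[of 0 0] by (simp add: qz_exp_eq_1_iff qz_eq_def)
  finally have "?S = ?N"
    by simp
  with \<open>?S = 0\<close> show False
    by simp
qed

lemma quad_refinement_unique_up_to_shift:
  assumes q: "quad_refinement b q" and q': "quad_refinement b q'"
  obtains \<delta> c where "\<And>x. qz_eq (q' x) (q (x + \<delta>) + c)"
proof -
  have q_def: "qz_eq (q (x + y) - q x - q y + q 0) (b x y)"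
    and q'_def: "qz_eq (q' (x + y) - q' x - q' y + q' 0) (b x y)" for x y
    using q q' unfolding quad_refinement_def by blast+
  define \<phi> where "\<phi> x = (q' x - q' 0) - (q x - q 0)" for x
  have "qz_eq (\<phi> (x + y)) (\<phi> x + \<phi> y)" for x y
    by (rule qz_eq_of_diff_eq[OF qz_eq_diff[OF q'_def[of x y] q_def[of x y]]]) (simp add: \<phi>_def)
  then obtain \<delta> where \<delta>: "\<And>x. qz_eq (\<phi> x) (b x \<delta>)"
    using qz_hom_represented_by_b by blast
  have "qz_eq (q' x) (q (x + \<delta>) + (q' 0 - q \<delta>))" for x
    by (rule qz_eq_of_diff_eq[OF qz_eq_diff[OF \<delta>[of x] q_def[of x \<delta>]]]) (simp add: \<phi>_def)
  then show ?thesis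
    using that by blast
qed

section \<open>Phases of Gauss sums\<close>

lemma tau1_mult_cnj:
  assumes "quad_refinement b q"
  shows "tau1 q * cnj (tau1 q) = of_nat CARD('a)"
proof -
  have q_shift: "qz_exp (q (x + y) - q y) = qz_exp (q x - q 0) * qz_exp (b x y)" for x y
  proof -
    have "qz_eq (q (x + y) - q x - q y + q 0) (b x y)"
      using assms unfolding quad_refinement_def by blast
    then have "qz_eq (q (x + y) - q y) (q x - q 0 + b x y)"
      by (rule qz_eq_of_diff_eq) simp
    then show ?thesis
      by (simp only: qz_exp_add flip: qz_exp_eq_iff)
  qed
  have "tau1 q * cnj (tau1 q) = (\<Sum>x\<in>UNIV. \<Sum>y\<in>UNIV. qz_exp (q x - q y))"
    unfolding tau1_eq_sum_qz_exp by (simp add: sum_product qz_exp_diff)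
  also have "\<dots> = (\<Sum>y\<in>UNIV. \<Sum>x\<in>UNIV. qz_exp (q (x + y) - q y))"
    by (subst sum.swap) (simp add: sum_UNIV_shift[of "\<lambda>x. qz_exp (q x - q _)"])
  also have "\<dots> = (\<Sum>y\<in>UNIV. \<Sum>x\<in>UNIV. qz_exp (q x - q 0) * qz_exp (b x y))"
    by (simp add: q_shift)
  also have "\<dots> = (\<Sum>x\<in>UNIV. qz_exp (q x - q 0) * (\<Sum>y\<in>UNIV. qz_exp (b x y)))"
    by (subst sum.swap) (simp add: sum_distrib_left)
  also have "\<dots> = of_nat CARD('a)"
    by (simp add: sum_qz_exp_b if_distrib cong: if_cong)
  finally show ?thesis .
qed

lemma tau1_nonzero: "quad_refinement b q \<Longrightarrow> tau1 q \<noteq> 0"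
  using tau1_mult_cnj[of q] by auto

lemma qr_equiv_if_sgn_tau1_eq:
  assumes q: "quad_refinement b q" and q': "quad_refinement b q'"
    and sgn_eq: "sgn (tau1 q') = sgn (tau1 q)"
  shows "qr_equiv q' q"
proof -
  obtain \<delta> c where \<delta>: "\<And>x. qz_eq (q' x) (q (x + \<delta>) + c)"
    using quad_refinement_unique_up_to_shift[OF q q'] by blast
  then have "tau1 q' = qz_exp c * tau1 q"
    by (simp add: tau1_cong[OF \<delta>] tau1_shift_add)
  then have "qz_exp c * sgn (tau1 q) = sgn (tau1 q)"
    using sgn_eq by (simp add: sgn_mult)
  then have "qz_exp c = 1"
    using tau1_nonzero[OF q] by (simp add: sgn_zero_iff)
  then have "qz_eq (q' x) (q (x + \<delta>))" for x
    using qz_eq_trans[OF \<delta>[of x]] by (simp add: qz_exp_eq_1_iff qz_eq_def)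
  then show ?thesis
    unfolding qr_equiv_def by blast
qed

lemma quad_refinement_anti_isometry:
  assumes f: "group_aut f" and anti: "\<And>x y. qz_eq (b (f x) (f y)) (- b x y)"
    and q: "quad_refinement b q"
  shows "quad_refinement b (\<lambda>x. - q (f x))"
  unfolding quad_refinement_def
proof (intro allI)
  fix x y
  have f_add: "f (x + y) = f x + f y" and f_0: "f 0 = 0"
    using f unfolding group_aut_def by (auto dest: spec[of _ 0])
  have "qz_eq (q (f x + f y) - q (f x) - q (f y) + q 0) (- b x y)"
    using q anti unfolding quad_refinement_def by (blast intro: qz_eq_trans)
  then show "qz_eq (- q (f (x + y)) - - q (f x) - - q (f y) + - q (f 0)) (b x y)"
    by (rule qz_eq_of_diff_eq[OF qz_eq_minus]) (simp add: f_add f_0)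
qed

lemma sgn_tau1_square:
  assumes f: "group_aut f" and anti: "\<And>x y. qz_eq (b (f x) (f y)) (- b x y)"
    and q: "quad_refinement b q"
  obtains \<delta> c where "\<And>x. qz_eq (q (f x)) (c - q (x + \<delta>))" and "sgn (tau1 q) ^ 2 = qz_exp c"
proof -
  obtain \<delta> c where \<delta>: "\<And>x. qz_eq (- q (f x)) (q (x + \<delta>) + c)"
    using quad_refinement_unique_up_to_shift[OF q quad_refinement_anti_isometry[OF f anti q]] by blast
  have q_f: "qz_eq (q (f x)) (- c - q (x + \<delta>))" for x
    by (rule qz_eq_of_diff_eq[OF qz_eq_minus[OF \<delta>[of x]]]) simp
  have "tau1 q = tau1 (q \<circ> f)"
    using f unfolding group_aut_def by (simp add: tau1_comp_bij)
  also have "\<dots> = tau1 (\<lambda>x. - q (x + \<delta>) + - c)"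
    by (rule tau1_cong) (use q_f in \<open>simp add: algebra_simps\<close>)
  also have "\<dots> = qz_exp (- c) * cnj (tau1 q)"
    by (simp only: tau1_shift_add[of "\<lambda>x. - q x"] tau1_uminus)
  finally have "sgn (tau1 q) ^ 2 = qz_exp (- c)"
    by (rule sgn_power2_eq[OF tau1_nonzero[OF q]])
  with q_f show ?thesis
    using that by blast
qed

lemma sgn_tau1_eq_qz_exp:
  assumes "iso_to_neg b" and q: "quad_refinement b q"
  obtains \<theta> where "sgn (tau1 q) = qz_exp \<theta>"
proof -
  obtain f where f: "group_aut f" "\<And>x y. qz_eq (b (f x) (f y)) (- b x y)"
    using assms(1) unfolding iso_to_neg_def by blast
  obtain c where "sgn (tau1 q) ^ 2 = qz_exp c"
    using sgn_tau1_square[OF f q] by blast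
  then show ?thesis
    using that qz_exp_sqrt by blast
qed

lemma T_refinement_if_sgn_tau1_square_eq_1:
  assumes "iso_to_neg b" and q: "quad_refinement b q" and "sgn (tau1 q) ^ 2 = 1"
  shows "T_refinement b q"
proof -
  obtain f where f: "group_aut f" "\<And>x y. qz_eq (b (f x) (f y)) (- b x y)"
    using assms(1) unfolding iso_to_neg_def by blast
  obtain \<delta> c where q_f: "\<And>x. qz_eq (q (f x)) (c - q (x + \<delta>))" and "sgn (tau1 q) ^ 2 = qz_exp c"
    using sgn_tau1_square[OF f q] by blast
  then have "c \<in> \<int>"
    using assms(3) by (simp add: qz_exp_eq_1_iff)
  then have "qz_eq (c - q (x + \<delta>)) (- q (x + \<delta>))" for x
    by (simp add: qz_eq_def)
  then have "qz_eq ((q \<circ> f) x) (- q (x + \<delta>))" for x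
    using qz_eq_trans[OF q_f] by simp
  then show ?thesis
    using q f(1) unfolding T_refinement_def qr_equiv_def by blast
qed

end

theorem proposition7:
  fixes b :: "'a::{finite,ab_group_add} \<Rightarrow> 'a \<Rightarrow> rat" and \<sigma> :: int
  assumes "finite_bilinear_form b"
    and "iso_to_neg b"
    and "\<sigma> \<in> {0, 4}"
  shows "\<exists>q. T_refinement b q
              \<and> tau1 q / complex_of_real (cmod (tau1 q)) = exp (2 * pi * \<i> * of_int \<sigma> / 8)
              \<and> (\<forall>q'. T_refinement b q'
                    \<and> tau1 q' / complex_of_real (cmod (tau1 q')) = exp (2 * pi * \<i> * of_int \<sigma> / 8)
                    \<longrightarrow> qr_equiv q' q)"
proof -
  interpret qz_bilinear_form b
    by (rule qz_bilinear_form.intro) (fact assms(1))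
  obtain Q where Q: "quad_refinement b Q"
    by (rule exists_quad_refinement)
  obtain \<theta> where \<theta>: "sgn (tau1 Q) = qz_exp \<theta>"
    using sgn_tau1_eq_qz_exp[OF assms(2) Q] by blast
  define q where "q = (\<lambda>x. Q x + (of_int \<sigma> / 8 - \<theta>))"
  have q: "quad_refinement b q"
    unfolding q_def by (rule quad_refinement_add_const[OF Q])
  have "tau1 q = qz_exp (of_int \<sigma> / 8 - \<theta>) * tau1 Q"
    using tau1_shift_add[of Q 0] by (simp add: q_def)
  then have sgn_q: "sgn (tau1 q) = qz_exp (of_int \<sigma> / 8)"
    by (simp add: sgn_mult \<theta> flip: qz_exp_add)
  have "of_int \<sigma> / 8 + of_int \<sigma> / 8 \<in> (\<int> :: rat set)"
    using assms(3) by auto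
  then have "sgn (tau1 q) ^ 2 = 1"
    by (simp add: sgn_q power2_eq_square qz_exp_eq_1_iff flip: qz_exp_add)
  then have "T_refinement b q"
    by (rule T_refinement_if_sgn_tau1_square_eq_1[OF assms(2) q])
  moreover have "qr_equiv q' q" if "T_refinement b q'" and "sgn (tau1 q') = qz_exp (of_int \<sigma> / 8)" for q'
    using that sgn_q qr_equiv_if_sgn_tau1_eq[OF q] unfolding T_refinement_def by simp
  ultimately show ?thesis
    unfolding sgn_eq[symmetric] qz_exp_of_int_div_numeral[symmetric] using sgn_q by blast
qed

end
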